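(* Let $A\in\mathbb{C}^{m\times n}$ and $B\in\mathbb{C}^{n\times p}$. Then each of the following sets of matrices is contained in $\{(AB)^{(1)}\}$: $$\{(A^{(1)}AB)^{(1)}A^{(1)}\},\quad \{B^{(1)}(ABB^{(1)})^{(1)}\},\quad \{(A^{*}AB)^{(1)}A^{*}\},\quad \{B^{*}(ABB^{*})^{(1)}\},\quad \{(AA^{*}AB)^{(1)}AA^{*}\},$$ $$\{B^{*}B(ABB^{*}B)^{(1)}\},\quad \{B^{(1)}(A^{(1)}ABB^{(1)})^{(1)}A^{(1)}\},\quad \{B^{*}(A^{*}ABB^{*})^{(1)}A^{*}\},\quad \{B^{*}B(AA^{*}ABB^{*}B)^{(1)}AA^{*}\}.$$
   Context: For a complex matrix $X$, $X^*$ is its conjugate transpose, $r(X)$ its rank and $\mathscr{R}(X)$ its column space. For $X\in\mathbb{C}^{p\times q}$, a matrix $G\in\mathbb{C}^{q\times p}$ is called an $\{i,\ldots,j\}$-generalized inverse of $X$ (written $X^{(i,\ldots,j)}$) if it satisfies the equations numbered $i,\ldots,j$ among the four Penrose equations (i) $XGX=X$, (ii) $GXG=G$, (iii) $(XG)^*=XG$, (iv) $(GX)^*=GX$; $\{X^{(i,\ldots,j)}\}$ denotes the set of all such $G$. The Moore–Penrose inverse $X^\dagger$ is the unique matrix satisfying all four equations. For a matrix expression involving generalized inverses, $\{\cdot\}$ denotes the set of all values of the expression as each generalized inverse occurring in it ranges over all admissible choices; repeated occurrences of the same symbol (e.g. $A^{(1)}$ appearing twice) denote one and the same choice, and a generalized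 inverse of a matrix that itself contains a chosen generalized inverse is taken with respect to that chosen matrix. *)

theory Defs
  imports Complex_Main "Jordan_Normal_Form.Matrix"
begin

definition ctrans :: "complex mat \<Rightarrow> complex mat" where
  "ctrans X = mat (dim_col X) (dim_row X) (\<lambda>(i,j). cnj (X $$ (j,i)))"

definition inv1 :: "complex mat \<Rightarrow> complex mat set" where
  "inv1 X = {G. G \<in> carrier_mat (dim_col X) (dim_row X) \<and> X * G * X = X}"

end

theory Submission
  imports Defs
begin

text \<open>Each of the nine matrices has the form \<open>Q G P\<close> with \<open>G\<close> a {1}-inverse of
  \<open>P A B Q\<close>, where the left factor \<open>P\<close> (the identity, \<open>A\<^sup>(\<^sup>1\<^sup>)\<close>, \<open>A\<^sup>*\<close> or
  \<open>A A\<^sup>*\<close>) is injective on the column space of \<open>A B\<close> and the right factor \<open>Q\<close> (the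
  identity, \<open>B\<^sup>(\<^sup>1\<^sup>)\<close>, \<open>B\<^sup>*\<close> or \<open>B\<^sup>* B\<close>) acts injectively on its row space.
  Cancelling \<open>P\<close> and \<open>Q\<close> in \<open>P A B Q G P A B Q = P A B Q\<close> leaves
  \<open>A B (Q G P) A B = A B\<close>. A {1}-inverse \<open>A\<^sup>(\<^sup>1\<^sup>)\<close> is injective on the column space
  of \<open>A\<close> since \<open>A A\<^sup>(\<^sup>1\<^sup>) A = A\<close>; so is \<open>A\<^sup>*\<close>, since \<open>A\<^sup>* A Y = 0\<close> forces
  \<open>(A Y)\<^sup>* (A Y) = 0\<close> and hence \<open>A Y = 0\<close>.\<close>

lemma assoc_mult_mat_dim:
  fixes A B C :: "'a :: semiring_0 mat"
  assumes "dim_col A = dim_row B" "dim_col B = dim_row C"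
  shows "A * B * C = A * (B * C)"
  using assms by (intro assoc_mult_mat[of A "dim_row A" "dim_col A" B "dim_col B" C "dim_col C"]) auto

lemma dim_ctrans [simp]: "dim_row (ctrans X) = dim_col X" "dim_col (ctrans X) = dim_row X"
  by (auto simp: ctrans_def)

lemma index_ctrans [simp]:
  "i < dim_col X \<Longrightarrow> j < dim_row X \<Longrightarrow> ctrans X $$ (i, j) = cnj (X $$ (j, i))"
  by (auto simp: ctrans_def)

lemma ctrans_ctrans [simp]: "ctrans (ctrans X) = X"
  by (intro eq_matI) auto

lemma ctrans_mult: "dim_col A = dim_row B \<Longrightarrow> ctrans (A * B) = ctrans B * ctrans A"
  by (intro eq_matI) (auto simp: scalar_prod_def ac_simps)

lemma ctrans_mult_self_eq_0D:
  assumes "ctrans D * D = 0\<^sub>m (dim_col D) (dim_col D)"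
  shows "D = 0\<^sub>m (dim_row D) (dim_col D)"
proof (rule eq_matI)
  fix i j assume i: "i < dim_row (0\<^sub>m (dim_row D) (dim_col D))"
    and j: "j < dim_col (0\<^sub>m (dim_row D) (dim_col D))"
  have "row (ctrans D) j = conjugate (col D j)"
    using j by (intro eq_vecI) auto
  then have "col D j \<bullet>c col D j = (ctrans D * D) $$ (j, j)"
    using j by (simp add: conjugate_vec_sprod_comm[of _ "dim_row D"])
  also have "\<dots> = 0"
    using assms j by simp
  finally have "col D j = 0\<^sub>v (dim_row D)"
    using conjugate_square_eq_0_vec[of "col D j" "dim_row D"] by simp
  then have "col D j $ i = 0"
    using i by simp
  then show "D $$ (i, j) = 0\<^sub>m (dim_row D) (dim_col D) $$ (i, j)"
    using i j by simp
qed auto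

definition left_cancels :: "'a :: semiring_0 mat \<Rightarrow> 'a mat \<Rightarrow> bool" where
  "left_cancels P X \<longleftrightarrow> (\<forall>Y Z. dim_row Y = dim_col X \<longrightarrow> dim_row Z = dim_col X \<longrightarrow>
     P * X * Y = P * X * Z \<longrightarrow> X * Y = X * Z)"

definition right_cancels :: "'a :: semiring_0 mat \<Rightarrow> 'a mat \<Rightarrow> bool" where
  "right_cancels Q X \<longleftrightarrow> (\<forall>Y Z. dim_col Y = dim_row X \<longrightarrow> dim_col Z = dim_row X \<longrightarrow>
     Y * X * Q = Z * X * Q \<longrightarrow> Y * X = Z * X)"

lemma left_cancelsD:
  "left_cancels P X \<Longrightarrow> dim_row Y = dim_col X \<Longrightarrow> dim_row Z = dim_col X \<Longrightarrow>
    P * X * Y = P * X * Z \<Longrightarrow> X * Y = X * Z"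
  unfolding left_cancels_def by blast

lemma right_cancelsD:
  "right_cancels Q X \<Longrightarrow> dim_col Y = dim_row X \<Longrightarrow> dim_col Z = dim_row X \<Longrightarrow>
    Y * X * Q = Z * X * Q \<Longrightarrow> Y * X = Z * X"
  unfolding right_cancels_def by blast

lemma left_cancels_ctrans: "left_cancels (ctrans A) A"
  unfolding left_cancels_def
proof (intro allI impI)
  fix Y Z :: "complex mat"
  assume "dim_row Y = dim_col A" and "dim_row Z = dim_col A"
    and eq: "ctrans A * A * Y = ctrans A * A * Z"
  moreover obtain k where "dim_col Y = k" and "dim_col Z = k"
    using eq by (metis index_mult_mat(3))
  ultimately have Y: "Y \<in> carrier_mat (dim_col A) k" and Z: "Z \<in> carrier_mat (dim_col A) k"
    by auto
  have A: "A \<in> carrier_mat (dim_row A) (dim_col A)"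
    by simp
  define D where "D = A * Y - A * Z"
  have D: "D = A * (Y - Z)"
    unfolding D_def by (rule mult_minus_distrib_mat[OF A Y Z, symmetric])
  have "ctrans A * D = ctrans A * (A * Y) - ctrans A * (A * Z)"
    unfolding D_def using Y Z by (intro mult_minus_distrib_mat[of _ "dim_col A" "dim_row A"]) auto
  also have "\<dots> = ctrans A * A * Y - ctrans A * A * Z"
    using Y Z by (simp add: assoc_mult_mat_dim)
  also have "\<dots> = 0\<^sub>m (dim_col A) k"
    unfolding eq using Z by (intro minus_r_inv_mat) auto
  finally have "ctrans D * D = 0\<^sub>m (dim_col D) (dim_col D)"
    using Y Z by (simp add: D ctrans_mult assoc_mult_mat_dim)
  then have D0: "D = 0\<^sub>m (dim_row D) (dim_col D)"
    by (rule ctrans_mult_self_eq_0D)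
  show "A * Y = A * Z"
  proof (rule eq_matI)
    fix i j assume ij: "i < dim_row (A * Z)" "j < dim_col (A * Z)"
    then have "(A * Y) $$ (i, j) - (A * Z) $$ (i, j) = D $$ (i, j)"
      using Y Z by (simp add: D_def)
    also have "\<dots> = 0"
      using D0[THEN arg_cong[where f = "\<lambda>M. M $$ (i, j)"]] ij Z by (simp add: D_def)
    finally show "(A * Y) $$ (i, j) = (A * Z) $$ (i, j)"
      by simp
  qed (use Y Z in auto)
qed

lemma right_cancels_ctrans: "right_cancels (ctrans B) B"
  unfolding right_cancels_def
proof (intro allI impI)
  fix Y Z :: "complex mat"
  assume Y: "dim_col Y = dim_row B" and Z: "dim_col Z = dim_row B"
    and eq: "Y * B * ctrans B = Z * B * ctrans B"
  have "B * ctrans B * ctrans Y = ctrans (Y * B * ctrans B)"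
    using Y by (simp add: ctrans_mult assoc_mult_mat_dim)
  also have "\<dots> = B * ctrans B * ctrans Z"
    using Z by (simp add: eq ctrans_mult assoc_mult_mat_dim)
  finally have "ctrans B * ctrans Y = ctrans B * ctrans Z"
    using Y Z by (intro left_cancelsD[OF left_cancels_ctrans[of "ctrans B", simplified]]) simp_all
  then have "ctrans (ctrans B * ctrans Y) = ctrans (ctrans B * ctrans Z)"
    by simp
  then show "Y * B = Z * B"
    using Y Z by (simp add: ctrans_mult)
qed

lemma inv1_carrier: "G \<in> inv1 X \<Longrightarrow> G \<in> carrier_mat (dim_col X) (dim_row X)"
  by (simp add: inv1_def)

lemma left_cancels_inv1:
  assumes "G \<in> inv1 X"
  shows "left_cancels G X"
  unfolding left_cancels_def
proof (intro allI impI)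
  fix Y Z :: "complex mat"
  assume Y: "dim_row Y = dim_col X" and Z: "dim_row Z = dim_col X" and eq: "G * X * Y = G * X * Z"
  have G: "G \<in> carrier_mat (dim_col X) (dim_row X)" and XGX: "X * G * X = X"
    using assms by (auto simp: inv1_def)
  have "X * Y = X * G * X * Y"
    by (simp add: XGX)
  also have "\<dots> = X * (G * X * Y)"
    using G Y by (simp add: assoc_mult_mat_dim)
  also have "\<dots> = X * G * X * Z"
    using G Z by (simp add: eq assoc_mult_mat_dim)
  finally show "X * Y = X * Z"
    by (simp add: XGX)
qed

lemma right_cancels_inv1:
  assumes "G \<in> inv1 X"
  shows "right_cancels G X"
  unfolding right_cancels_def
proof (intro allI impI)
  fix Y Z :: "complex mat"
  assume Y: "dim_col Y = dim_row X" and Z: "dim_col Z = dim_row X" and eq: "Y * X * G = Z * X * G"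
  have G: "G \<in> carrier_mat (dim_col X) (dim_row X)" and XGX: "X * G * X = X"
    using assms by (auto simp: inv1_def)
  have "Y * X = Y * (X * G * X)"
    by (simp add: XGX)
  also have "\<dots> = Y * X * G * X"
    using G Y by (simp add: assoc_mult_mat_dim)
  also have "\<dots> = Z * (X * G * X)"
    using G Z by (simp add: eq assoc_mult_mat_dim)
  finally show "Y * X = Z * X"
    by (simp add: XGX)
qed

lemma left_cancels_mult_right:
  fixes P X W :: "'a :: semiring_0 mat"
  assumes "dim_col P = dim_row X" "dim_col X = dim_row W" and "left_cancels P X"
  shows "left_cancels P (X * W)"
  unfolding left_cancels_def
proof (intro allI impI)
  fix Y Z
  assume Y: "dim_row Y = dim_col (X * W)" and Z: "dim_row Z = dim_col (X * W)"
    and "P * (X * W) * Y = P * (X * W) * Z"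
  then have "P * X * (W * Y) = P * X * (W * Z)"
    using assms(1,2) by (simp add: assoc_mult_mat_dim)
  then have "X * (W * Y) = X * (W * Z)"
    using assms(2) Y Z by (intro left_cancelsD[OF assms(3)]) simp_all
  then show "X * W * Y = X * W * Z"
    using assms(2) Y Z by (simp add: assoc_mult_mat_dim)
qed

lemma right_cancels_mult_left:
  fixes Q X W :: "'a :: semiring_0 mat"
  assumes "dim_col W = dim_row X" "dim_col X = dim_row Q" and "right_cancels Q X"
  shows "right_cancels Q (W * X)"
  unfolding right_cancels_def
proof (intro allI impI)
  fix Y Z
  assume Y: "dim_col Y = dim_row (W * X)" and Z: "dim_col Z = dim_row (W * X)"
    and "Y * (W * X) * Q = Z * (W * X) * Q"
  then have "Y * W * X * Q = Z * W * X * Q"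
    using assms(1,2) by (simp add: assoc_mult_mat_dim)
  then have "Y * W * X = Z * W * X"
    using assms(1) Y Z by (intro right_cancelsD[OF assms(3)]) simp_all
  then show "Y * (W * X) = Z * (W * X)"
    using assms(1) Y Z by (simp add: assoc_mult_mat_dim)
qed

lemma left_cancels_mult:
  fixes P P' X :: "'a :: semiring_0 mat"
  assumes "dim_col P' = dim_row P" "dim_col P = dim_row X"
    and "left_cancels P X" "left_cancels P' (P * X)"
  shows "left_cancels (P' * P) X"
  unfolding left_cancels_def
proof (intro allI impI)
  fix Y Z
  assume Y: "dim_row Y = dim_col X" and Z: "dim_row Z = dim_col X" and "P' * P * X * Y = P' * P * X * Z"
  then have "P' * (P * X) * Y = P' * (P * X) * Z"
    using assms(1,2) by (simp add: assoc_mult_mat_dim)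
  then have "P * X * Y = P * X * Z"
    using Y Z by (intro left_cancelsD[OF assms(4)]) simp_all
  then show "X * Y = X * Z"
    using Y Z by (rule left_cancelsD[OF assms(3), rotated -1])
qed

lemma right_cancels_mult:
  fixes Q Q' X :: "'a :: semiring_0 mat"
  assumes "dim_col X = dim_row Q" "dim_col Q = dim_row Q'"
    and "right_cancels Q X" "right_cancels Q' (X * Q)"
  shows "right_cancels (Q * Q') X"
  unfolding right_cancels_def
proof (intro allI impI)
  fix Y Z
  assume Y: "dim_col Y = dim_row X" and Z: "dim_col Z = dim_row X" and "Y * X * (Q * Q') = Z * X * (Q * Q')"
  then have "Y * (X * Q) * Q' = Z * (X * Q) * Q'"
    using assms(1,2) by (simp add: assoc_mult_mat_dim)
  then have "Y * (X * Q) = Z * (X * Q)"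
    using Y Z by (intro right_cancelsD[OF assms(4)]) simp_all
  then have "Y * X * Q = Z * X * Q"
    using assms(1) Y Z by (simp add: assoc_mult_mat_dim)
  then show "Y * X = Z * X"
    using Y Z by (rule right_cancelsD[OF assms(3), rotated -1])
qed

lemma left_cancels_mult_ctrans: "left_cancels (A * ctrans A) A"
proof (rule left_cancels_mult)
  show "left_cancels A (ctrans A * A)"
    using left_cancels_ctrans[of "ctrans A"] by (intro left_cancels_mult_right) simp_all
qed (simp_all add: left_cancels_ctrans)

lemma right_cancels_ctrans_mult: "right_cancels (ctrans B * B) B"
proof (rule right_cancels_mult)
  show "right_cancels B (B * ctrans B)"
    using right_cancels_ctrans[of "ctrans B"] by (intro right_cancels_mult_left) simp_all
qed (simp_all add: right_cancels_ctrans)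

lemma left_cancels_one: "left_cancels (1\<^sub>m (dim_row X)) (X :: 'a :: semiring_1 mat)"
  by (simp add: left_cancels_def)

lemma right_cancels_one: "right_cancels (1\<^sub>m (dim_col X)) (X :: 'a :: semiring_1 mat)"
  by (simp add: right_cancels_def)

lemma inv1_sandwich:
  fixes X P Q G :: "complex mat"
  assumes X: "X \<in> carrier_mat m p" and P: "P \<in> carrier_mat k m" and Q: "Q \<in> carrier_mat p l"
    and PX: "left_cancels P X" and QX: "right_cancels Q X" and G: "G \<in> inv1 (P * X * Q)"
  shows "Q * G * P \<in> inv1 X"
proof -
  have Gc: "G \<in> carrier_mat l k" and "P * X * Q * G * (P * X * Q) = P * X * Q"
    using G X P Q by (auto simp: inv1_def)
  then have "P * X * (Q * G * P * X * Q) = P * X * Q"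
    using X P Q by (simp add: assoc_mult_mat_dim)
  then have "X * (Q * G * P * X * Q) = X * Q"
    using X P Q Gc by (intro left_cancelsD[OF PX]) simp_all
  then have "X * Q * G * P * X * Q = 1\<^sub>m m * X * Q"
    using X P Q Gc by (simp add: assoc_mult_mat_dim)
  then have "X * Q * G * P * X = 1\<^sub>m m * X"
    using X P Q Gc by (intro right_cancelsD[OF QX]) simp_all
  then show ?thesis
    using X P Q Gc by (simp add: inv1_def assoc_mult_mat_dim)
qed

lemma inv1_mult_sandwich:
  assumes A: "A \<in> carrier_mat m n" and B: "B \<in> carrier_mat n p"
    and P: "P \<in> carrier_mat k m" and Q: "Q \<in> carrier_mat p l"
    and "left_cancels P A" "right_cancels Q B" and G: "G \<in> inv1 (P * A * B * Q)"
  shows "Q * G * P \<in> inv1 (A * B)"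
proof (rule inv1_sandwich)
  show "left_cancels P (A * B)"
    using assms by (intro left_cancels_mult_right) auto
  show "right_cancels Q (A * B)"
    using assms by (intro right_cancels_mult_left) auto
  show "G \<in> inv1 (P * (A * B) * Q)"
    using G A B P by (simp add: assoc_mult_mat_dim)
qed (use A B P Q in auto)

lemma inv1_mult_sandwich_left:
  assumes A: "A \<in> carrier_mat m n" and B: "B \<in> carrier_mat n p" and P: "P \<in> carrier_mat k m"
    and "left_cancels P A" and G: "G \<in> inv1 (P * A * B)"
  shows "G * P \<in> inv1 (A * B)"
proof -
  have "1\<^sub>m p * G * P \<in> inv1 (A * B)"
    using G B right_cancels_one[of B]
    by (intro inv1_mult_sandwich[OF A B P _ \<open>left_cancels P A\<close>]) auto
  then show ?thesis
    using inv1_carrier[OF G] A B P by simp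
qed

lemma inv1_mult_sandwich_right:
  assumes A: "A \<in> carrier_mat m n" and B: "B \<in> carrier_mat n p" and Q: "Q \<in> carrier_mat p l"
    and "right_cancels Q B" and G: "G \<in> inv1 (A * B * Q)"
  shows "Q * G \<in> inv1 (A * B)"
proof -
  have "Q * G * 1\<^sub>m m \<in> inv1 (A * B)"
    using G A left_cancels_one[of A]
    by (intro inv1_mult_sandwich[OF A B _ Q _ \<open>right_cancels Q B\<close>]) auto
  then show ?thesis
    using inv1_carrier[OF G] A B Q by simp
qed

theorem theorem3p1:
  fixes A B :: "complex mat" and m n p :: nat
  assumes "A \<in> carrier_mat m n" and "B \<in> carrier_mat n p"
  shows "({G * A1 | G A1. A1 \<in> inv1 A \<and> G \<in> inv1 (A1 * A * B)} \<subseteq> inv1 (A * B))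
   \<and> ({B1 * G | G B1. B1 \<in> inv1 B \<and> G \<in> inv1 (A * B * B1)} \<subseteq> inv1 (A * B))
   \<and> ({G * ctrans A | G. G \<in> inv1 (ctrans A * A * B)} \<subseteq> inv1 (A * B))
   \<and> ({ctrans B * G | G. G \<in> inv1 (A * B * ctrans B)} \<subseteq> inv1 (A * B))
   \<and> ({G * A * ctrans A | G. G \<in> inv1 (A * ctrans A * A * B)} \<subseteq> inv1 (A * B))
   \<and> ({ctrans B * B * G | G. G \<in> inv1 (A * B * ctrans B * B)} \<subseteq> inv1 (A * B))
   \<and> ({B1 * G * A1 | G A1 B1. A1 \<in> inv1 A \<and> B1 \<in> inv1 B \<and> G \<in> inv1 (A1 * A * B * B1)}
      \<subseteq> inv1 (A * B))
   \<and> ({ctrans B * G * ctrans A | G. G \<in> inv1 (ctrans A * A * B * ctrans B)} \<subseteq> inv1 (A * B))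
   \<and> ({ctrans B * B * G * A * ctrans A | G. G \<in> inv1 (A * ctrans A * A * B * ctrans B * B)}
      \<subseteq> inv1 (A * B))"
proof -
  note A = assms(1) and B = assms(2)
  note left = inv1_mult_sandwich_left[OF A B] and right = inv1_mult_sandwich_right[OF A B]
    and both = inv1_mult_sandwich[OF A B]
  have A1: "A1 \<in> carrier_mat n m" if "A1 \<in> inv1 A" for A1
    using inv1_carrier[OF that] A by simp
  have B1: "B1 \<in> carrier_mat p n" if "B1 \<in> inv1 B" for B1
    using inv1_carrier[OF that] B by simp
  have At: "ctrans A \<in> carrier_mat n m" and Bt: "ctrans B \<in> carrier_mat p n"
    and AAt: "A * ctrans A \<in> carrier_mat m m" and BtB: "ctrans B * B \<in> carrier_mat p p"
    using A B by auto
  have "G * A * ctrans A \<in> inv1 (A * B)" if "G \<in> inv1 (A * ctrans A * A * B)" for G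
    using left[OF AAt left_cancels_mult_ctrans that] inv1_carrier[OF that] A B
    by (simp add: assoc_mult_mat_dim)
  moreover have "ctrans B * B * G \<in> inv1 (A * B)" if "G \<in> inv1 (A * B * ctrans B * B)" for G
    using right[OF BtB right_cancels_ctrans_mult] that A B by (simp add: assoc_mult_mat_dim)
  moreover have "ctrans B * B * G * A * ctrans A \<in> inv1 (A * B)"
    if "G \<in> inv1 (A * ctrans A * A * B * ctrans B * B)" for G
    using both[OF AAt BtB left_cancels_mult_ctrans right_cancels_ctrans_mult, where G = G] that
      inv1_carrier[OF that] A B
    by (simp add: assoc_mult_mat_dim)
  ultimately show ?thesis
    using A1 B1 left[OF At left_cancels_ctrans] right[OF Bt right_cancels_ctrans]
      both[OF At Bt left_cancels_ctrans right_cancels_ctrans]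
      left[OF A1 left_cancels_inv1] right[OF B1 right_cancels_inv1]
      both[OF A1 B1 left_cancels_inv1 right_cancels_inv1]
    by blast
qed

end
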